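(* Let $n\ge1$ and let $\alpha=(a_n,\ldots,a_1)$ be a restricted sequence. In the expansion of $e'_\alpha$ as a $\mathbb{Q}(q)$-linear combination of the basis $\{e_\beta\}$ of $V_n$, the coefficient of $e_\alpha$ equals $1$.
   Context: $D_n$: non-crossing perfect matchings of $\{1,\ldots,2n\}$ (non-crossing $n$-chord diagrams), $D_0=\{\phi\}$. For $1\le k\le 2n+1$, $l_k:D_n\to D_{n+1}$: $l_k(\alpha)$ matches $k$ with $k+1$, old point $i$ becomes $i$ if $i<k$ and $i+2$ if $i\ge k$. Restricted sequence of $\alpha\in D_n$: let $k_n$ be the smallest $k$ with $k$ matched to $k+1$; it is $(k_n,k_{n-1},\ldots,k_1)$ with $(k_{n-1},\ldots,k_1)$ the restricted sequence of $\alpha$ with that arc removed (empty for $\phi$). This is a bijection from $D_n$ to restricted sequences of length $n$; $e_{(a_n,\ldots,a_1)}$ denotes the corresponding diagram. $V_n$: $\mathbb{Q}(q)$-vector space with basis $D_n$ ($q$ an indeterminate), $l_k$ extended linearly. $\Delta_{-1}=0$, $\Delta_0=1$, $\Delta_k=q\Delta_{k-1}-\Delta_{k-2}$. $e'$: $e'_{(1)}=e_{(1)}$; for $n\ge2$, $e'_{(a_n,\ldots,a_1)}=l_{a_n}(e'_{(a_{n-1},\ldots,a_1)})-\frac{\Delta_{a_n-2}}{\Delta_{a_n-1}}e'_{(a_n-1,a_{n-1},\ldots,a_1)}$ if $a_n\ge2$, and $e'_{(1,a_{n-1},\ldots,a_1)}=l_1(e'_{(a_{n-1},\ldots,a_1)})$.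 *)

theory Defs
  imports Main "HOL-Computational_Algebra.Polynomial" "HOL-Computational_Algebra.Fraction_Field"
begin

text \<open>A chord diagram on points 1..2n is an involution m on nat, fixed-point-free on
  {1..2n} and the identity outside {1..2n}.\<close>

definition D :: "nat \<Rightarrow> (nat \<Rightarrow> nat) set" where
  "D n = {m. (\<forall>x. x \<notin> {1..2*n} \<longrightarrow> m x = x)
           \<and> (\<forall>x\<in>{1..2*n}. m x \<in> {1..2*n} \<and> m x \<noteq> x \<and> m (m x) = x)
           \<and> (\<forall>a b c d. a < b \<and> b < c \<and> c < d \<and> m a = c \<and> m b = d \<longrightarrow> False)}"

definition shift :: "nat \<Rightarrow> nat \<Rightarrow> nat" where
  "shift k i = (if i < k then i else i + 2)"

definition l :: "nat \<Rightarrow> (nat \<Rightarrow> nat) \<Rightarrow> (nat \<Rightarrow> nat)" where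
  "l k m = (\<lambda>x. if x = k then k + 1 else if x = k + 1 then k
               else if x < k then shift k (m x) else shift k (m (x - 2)))"

definition unshift :: "nat \<Rightarrow> nat \<Rightarrow> nat" where
  "unshift k j = (if j < k then j else j - 2)"

definition remove_arc :: "nat \<Rightarrow> (nat \<Rightarrow> nat) \<Rightarrow> (nat \<Rightarrow> nat)" where
  "remove_arc k m = (\<lambda>x. if x < k then unshift k (m x) else unshift k (m (x + 2)))"

text \<open>Restricted sequence (a_n, ..., a_1) as the list [a_n, ..., a_1].\<close>
fun rseq :: "nat \<Rightarrow> (nat \<Rightarrow> nat) \<Rightarrow> nat list" where
  "rseq 0 m = []"
| "rseq (Suc n) m = (let k = (LEAST k. 1 \<le> k \<and> m k = k + 1) in k # rseq n (remove_arc k m))"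

definition restricted :: "nat \<Rightarrow> nat list \<Rightarrow> bool" where
  "restricted n s \<longleftrightarrow> (\<exists>\<alpha>\<in>D n. rseq n \<alpha> = s)"

definition diag :: "nat list \<Rightarrow> (nat \<Rightarrow> nat)" where
  "diag s = (THE \<alpha>. \<alpha> \<in> D (length s) \<and> rseq (length s) \<alpha> = s)"

text \<open>Q(q) and vectors of V_n as coefficient functions on diagrams.\<close>
type_synonym Qq = "rat poly fract"
type_synonym vec = "(nat \<Rightarrow> nat) \<Rightarrow> Qq"

definition qvar :: Qq where "qvar = Fract [:0, 1:] 1"

definition ev :: "nat list \<Rightarrow> vec" where
  "ev s = (\<lambda>\<gamma>. if \<gamma> = diag s then 1 else 0)"

text \<open>Linear extension of l_k : V_n \<rightarrow> V_{n+1}.\<close>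
definition L :: "nat \<Rightarrow> nat \<Rightarrow> vec \<Rightarrow> vec" where
  "L n k v = (\<lambda>\<gamma>. \<Sum>\<beta>\<in>{\<beta> \<in> D n. l k \<beta> = \<gamma>}. v \<beta>)"

text \<open>Delta_k for k \<ge> 0 (Delta_{-1} = 0 gives Delta_1 = q).\<close>
fun Delta :: "nat \<Rightarrow> Qq" where
  "Delta 0 = 1"
| "Delta (Suc 0) = qvar"
| "Delta (Suc (Suc k)) = qvar * Delta (Suc k) - Delta k"

text \<open>eprime a rest = e'_{(a, rest)}, an element of V_{length rest + 1}.\<close>
fun eprime :: "nat \<Rightarrow> nat list \<Rightarrow> vec" where
  "eprime a [] = ev [a]"
| "eprime a (b # rest) =
     (if 2 \<le> a then
        (\<lambda>\<gamma>. L (Suc (length rest)) a (eprime b rest) \<gamma>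
              - (Delta (a - 2) / Delta (a - 1)) * eprime (a - 1) (b # rest) \<gamma>)
      else L (Suc (length rest)) 1 (eprime b rest))"

end

theory Submission
  imports Defs
begin

text \<open>
  Write \<alpha> = (a, \<alpha>'). The diagram e(\<alpha>) is l_a(e(\<alpha>')), and its first short arc
  (k, k+1) starts at k = a. In e'(\<alpha>) = l_a(e'(\<alpha>')) - c e'(a-1, \<alpha>') the first term has
  coefficient 1 at e(\<alpha>) by induction, because l_a is injective. Every diagram in the
  support of e'(b, ...) is some l_k(\<beta>) with k \<le> b, so it has a short arc starting at or
  before b. Hence the correction term, where b = a - 1, vanishes at e(\<alpha>).
\<close>

lemma D_involution: "m \<in> D N \<Longrightarrow> m (m x) = x"
  unfolding D_def by (cases "x \<in> {1..2*N}") auto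

lemma D_fixed_iff: "m \<in> D N \<Longrightarrow> m x = x \<longleftrightarrow> x \<notin> {1..2*N}"
  unfolding D_def by auto

lemma D_closed: "m \<in> D N \<Longrightarrow> x \<in> {1..2*N} \<Longrightarrow> m x \<in> {1..2*N}"
  unfolding D_def by auto

lemma D_noncrossing:
  "m \<in> D N \<Longrightarrow> a < b \<Longrightarrow> b < c \<Longrightarrow> c < d \<Longrightarrow> m a = c \<Longrightarrow> m b = d \<Longrightarrow> False"
  unfolding D_def by blast

lemma unshift_shift [simp]: "unshift k (shift k x) = x"
  unfolding shift_def unshift_def by auto

lemma shift_unshift: "z \<noteq> k \<Longrightarrow> z \<noteq> k + 1 \<Longrightarrow> shift k (unshift k z) = z"
  unfolding shift_def unshift_def by auto

lemma shift_neq: "shift k x \<noteq> k" "shift k x \<noteq> k + 1"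
  unfolding shift_def by auto

lemma shift_less_iff: "shift k a < shift k b \<longleftrightarrow> a < b"
  unfolding shift_def by auto

lemma shift_eq_iff: "shift k a = shift k b \<longleftrightarrow> a = b"
  by (metis unshift_shift)

lemma l_shift: "l k m (shift k x) = shift k (m x)"
  unfolding l_def shift_def by auto

lemma l_at_arc: "l k m k = k + 1" "l k m (k + 1) = k"
  unfolding l_def by auto

lemma remove_arc_eq: "remove_arc k m x = unshift k (m (shift k x))"
  unfolding remove_arc_def shift_def by auto

lemma remove_arc_l [simp]: "remove_arc k (l k m) = m"
  by (rule ext) (simp add: remove_arc_eq l_shift)

lemma inj_l: "inj (l k)"
  by (metis injI remove_arc_l)

lemma shift_remove_arc:
  assumes m: "m \<in> D N" and k: "m k = k + 1"
  shows "shift k (remove_arc k m x) = m (shift k x)"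
proof -
  have "m (shift k x) \<noteq> k" "m (shift k x) \<noteq> k + 1"
    using D_involution[OF m] k shift_neq by metis+
  then show ?thesis by (simp add: remove_arc_eq shift_unshift)
qed

lemma l_remove_arc:
  assumes m: "m \<in> D N" and k: "m k = k + 1"
  shows "l k (remove_arc k m) = m"
proof
  fix x
  show "l k (remove_arc k m) x = m x"
  proof (cases "x = k \<or> x = k + 1")
    case True
    then show ?thesis using k D_involution[OF m, of k] l_at_arc by auto
  next
    case False
    then have "x = shift k (unshift k x)" by (simp add: shift_unshift)
    then show ?thesis by (metis l_shift shift_remove_arc[OF m k])
  qed
qed

lemma remove_arc_in_D:
  assumes m: "m \<in> D (Suc n)" and "1 \<le> k" and k: "m k = k + 1"
  shows "remove_arc k m \<in> D n"
proof -
  let ?r = "remove_arc k m"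
  have conj: "m (shift k x) = shift k (?r x)" for x
    using shift_remove_arc[OF m k] by simp
  have "k + 1 \<le> 2 * Suc n"
    using D_fixed_iff[OF m, of k] D_closed[OF m, of k] k by auto
  then have shift_range: "shift k x \<in> {1..2 * Suc n} \<longleftrightarrow> x \<in> {1..2*n}" for x
    using \<open>1 \<le> k\<close> unfolding shift_def by auto
  have "?r (?r x) = x" for x
    using D_involution[OF m] conj shift_eq_iff by metis
  moreover have "?r x = x \<longleftrightarrow> x \<notin> {1..2*n}" for x
    using D_fixed_iff[OF m, of "shift k x"] conj shift_eq_iff shift_range by metis
  moreover have "?r x \<in> {1..2*n}" if "x \<in> {1..2*n}" for x
    using D_closed[OF m, of "shift k x"] conj shift_range that by metis
  moreover have False if "a < b" "b < c" "c < d" "?r a = c" "?r b = d" for a b c d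
    using D_noncrossing[OF m, of "shift k a" "shift k b" "shift k c" "shift k d"]
      that conj shift_less_iff by metis
  ultimately show ?thesis
    unfolding D_def by blast
qed

lemma D_Suc_ex_short_arc:
  assumes m: "m \<in> D (Suc n)"
  shows "\<exists>k. 1 \<le> k \<and> m k = k + 1"
proof -
  let ?opener = "\<lambda>i. i \<in> {1..2 * Suc n} \<and> i < m i"
  have "m 1 \<noteq> 1" "m 1 \<in> {1..2 * Suc n}"
    using D_fixed_iff[OF m, of 1] D_closed[OF m, of 1] by auto
  then have "?opener 1" by auto
  then obtain i where i: "?opener i" and shortest: "\<And>j. ?opener j \<Longrightarrow> m i - i \<le> m j - j"
    using ex_has_least_nat[of ?opener 1 "\<lambda>i. m i - i"] by blast
  text \<open>A point strictly inside the shortest arc would be matched either inside it,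
    giving a shorter arc, or outside it, giving a crossing.\<close>
  have "m i = i + 1"
  proof (rule ccontr)
    assume "m i \<noteq> i + 1"
    then have inside: "i + 1 < m i" using i by simp
    have mi_range: "m i \<in> {1..2 * Suc n}" using D_closed[OF m] i by blast
    then have j_range: "i + 1 \<in> {1..2 * Suc n}" using inside by simp
    have "m (i + 1) \<noteq> i + 1" using D_fixed_iff[OF m] j_range by blast
    moreover have "m (i + 1) \<noteq> i" "m (i + 1) \<noteq> m i"
      using D_involution[OF m] inside by (metis less_not_refl2 less_add_one)+
    ultimately consider "m (i + 1) < i" | "i + 1 < m (i + 1)" "m (i + 1) < m i"
      | "m i < m (i + 1)"
      by linarith
    then show False
    proof cases
      case 1
      then show False
        using D_noncrossing[OF m, of "m (i + 1)" i "i + 1" "m i"] D_involution[OF m] inside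
        by simp
    next
      case 2
      then have "?opener (i + 1)" using j_range by simp
      then show False using shortest 2 by fastforce
    next
      case 3
      then show False
        using D_noncrossing[OF m, of i "i + 1" "m i" "m (i + 1)"] inside by simp
    qed
  qed
  then show ?thesis using i by auto
qed

lemma length_rseq: "length (rseq n m) = n"
  by (induction n arbitrary: m) (simp_all add: Let_def)

lemma rseq_Suc_ConsD:
  assumes m: "m \<in> D (Suc n)" and rs: "rseq (Suc n) m = a # s"
  shows "1 \<le> a" and "m a = a + 1" and "\<And>k. 1 \<le> k \<Longrightarrow> k < a \<Longrightarrow> m k \<noteq> k + 1"
    and "remove_arc a m \<in> D n" and "rseq n (remove_arc a m) = s"
proof -
  have a: "a = (LEAST k. 1 \<le> k \<and> m k = k + 1)"
    using rs by (simp add: Let_def)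
  have s: "s = rseq n (remove_arc a m)"
    using rs unfolding a by (simp add: Let_def)
  show arc: "1 \<le> a" "m a = a + 1"
    unfolding a using LeastI_ex[OF D_Suc_ex_short_arc[OF m]] by simp_all
  show "\<And>k. 1 \<le> k \<Longrightarrow> k < a \<Longrightarrow> m k \<noteq> k + 1"
    unfolding a using not_less_Least by blast
  show "remove_arc a m \<in> D n" using remove_arc_in_D[OF m arc] .
  show "rseq n (remove_arc a m) = s" using s by simp
qed

lemma rseq_inj: "m \<in> D n \<Longrightarrow> m' \<in> D n \<Longrightarrow> rseq n m = rseq n m' \<Longrightarrow> m = m'"
proof (induction n arbitrary: m m')
  case 0
  then show ?case unfolding D_def by auto
next
  case (Suc n)
  obtain a s where rs: "rseq (Suc n) m = a # s"
    by (metis length_rseq length_Suc_conv)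
  then have rs': "rseq (Suc n) m' = a # s" using Suc.prems by simp
  note arc = rseq_Suc_ConsD[OF Suc.prems(1) rs] and arc' = rseq_Suc_ConsD[OF Suc.prems(2) rs']
  have "remove_arc a m = remove_arc a m'"
    using Suc.IH arc(4,5) arc'(4,5) by simp
  then show ?case
    using l_remove_arc[OF Suc.prems(1) arc(2)] l_remove_arc[OF Suc.prems(2) arc'(2)] by metis
qed

lemma
  assumes "restricted n s"
  shows diag_in_D: "diag s \<in> D n" and rseq_diag: "rseq n (diag s) = s"
proof -
  obtain \<alpha> where \<alpha>: "\<alpha> \<in> D n" "rseq n \<alpha> = s"
    using assms unfolding restricted_def by blast
  then have "length s = n" using length_rseq by metis
  then have "diag s = \<alpha>"
    unfolding diag_def using \<alpha> rseq_inj by (intro the_equality) auto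
  then show "diag s \<in> D n" "rseq n (diag s) = s" using \<alpha> by simp_all
qed

lemma restricted_ConsD:
  assumes as: "restricted (Suc n) (a # s)"
  shows "restricted n s" and "diag (a # s) = l a (diag s)" and "1 \<le> a"
    and "\<And>k. 1 \<le> k \<Longrightarrow> k < a \<Longrightarrow> diag (a # s) k \<noteq> k + 1"
proof -
  note arc = rseq_Suc_ConsD[OF diag_in_D[OF as] rseq_diag[OF as]]
  show s: "restricted n s"
    unfolding restricted_def using arc(4,5) by blast
  have "diag s = remove_arc a (diag (a # s))"
    using rseq_inj[OF diag_in_D[OF s] arc(4)] rseq_diag[OF s] arc(5) by simp
  then show "diag (a # s) = l a (diag s)"
    using l_remove_arc[OF diag_in_D[OF as] arc(2)] by simp
  show "1 \<le> a" "\<And>k. 1 \<le> k \<Longrightarrow> k < a \<Longrightarrow> diag (a # s) k \<noteq> k + 1"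
    using arc(1,3) by auto
qed

lemma L_l: "\<beta> \<in> D n \<Longrightarrow> L n k v (l k \<beta>) = v \<beta>"
proof -
  assume "\<beta> \<in> D n"
  then have "{\<beta>' \<in> D n. l k \<beta>' = l k \<beta>} = {\<beta>}"
    using inj_l[of k] by (auto dest: injD)
  then show ?thesis unfolding L_def by simp
qed

lemma L_eq_0_if_no_arc: "\<gamma> k \<noteq> k + 1 \<Longrightarrow> L n k v \<gamma> = 0"
  unfolding L_def using l_at_arc(1) by (metis (mono_tags, lifting) empty_Collect_eq sum.empty)

declare eprime.simps(2) [simp del]

lemma eprime_Cons_ge_2:
  "2 \<le> a \<Longrightarrow> eprime a (b # r) \<gamma> =
     L (Suc (length r)) a (eprime b r) \<gamma> - Delta (a - 2) / Delta (a - 1) * eprime (a - 1) (b # r) \<gamma>"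
  by (simp add: eprime.simps(2))

lemma eprime_Cons_less_2: "a < 2 \<Longrightarrow> eprime a (b # r) = L (Suc (length r)) 1 (eprime b r)"
  by (simp add: eprime.simps(2))

lemma eprime_Cons_eq_0:
  "(\<And>k. 1 \<le> k \<Longrightarrow> k \<le> max 1 a \<Longrightarrow> \<gamma> k \<noteq> k + 1) \<Longrightarrow> eprime a (b # r) \<gamma> = 0"
proof (induction a)
  case 0
  then show ?case by (simp add: eprime_Cons_less_2 L_eq_0_if_no_arc)
next
  case (Suc a)
  show ?case
  proof (cases "2 \<le> Suc a")
    case True
    then have "eprime a (b # r) \<gamma> = 0" using Suc by simp
    moreover have "L (Suc (length r)) (Suc a) (eprime b r) \<gamma> = 0"
      using Suc.prems L_eq_0_if_no_arc by simp
    ultimately show ?thesis using eprime_Cons_ge_2[OF True] by simp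
  next
    case False
    then show ?thesis using Suc.prems by (simp add: eprime_Cons_less_2 L_eq_0_if_no_arc)
  qed
qed

theorem mainTheorem11:
  fixes a :: nat and rest :: "nat list"
  assumes "restricted (Suc (length rest)) (a # rest)"
  shows "eprime a rest (diag (a # rest)) = 1"
  using assms
proof (induction rest arbitrary: a)
  case Nil
  then show ?case by (simp add: ev_def)
next
  case (Cons b r)
  note \<alpha> = restricted_ConsD[OF Cons.prems[unfolded length_Cons]]
  have lifted: "L (Suc (length r)) a (eprime b r) (diag (a # b # r)) = 1"
    using \<alpha>(2) L_l[OF diag_in_D[OF \<alpha>(1)]] Cons.IH[OF \<alpha>(1)] by simp
  show ?case
  proof (cases "2 \<le> a")
    case True
    have "eprime (a - 1) (b # r) (diag (a # b # r)) = 0"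
      using \<alpha>(4) True by (intro eprime_Cons_eq_0) simp
    then show ?thesis using eprime_Cons_ge_2[OF True] lifted by simp
  next
    case False
    then have "a = 1" using \<alpha>(3) by simp
    then show ?thesis using eprime_Cons_less_2 lifted by simp
  qed
qed

end
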